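(* Let $(F_0,F_1,F_2)$ be a gapset filtration such that $\max F_0=\max F_1=\max F_2=m$. Let $F'_i=F_i\setminus\{m\}$ for $i=0,1,2$. Then $(F'_0,F'_1,F'_2)$ is a gapset filtration.
   Context: A gapset is a finite set $G \subset \mathbb{N}_+$ such that for all $z \in G$, whenever $z=x+y$ with $x,y\in\mathbb{N}_+$, we have $x\in G$ or $y\in G$. For $k\ge1$, a $k$-filtration is a sequence $(F_0,\dots,F_t)$ with $F_0=[1,k-1]\supseteq F_1\supseteq\dots\supseteq F_t$; it is a gapset filtration if $\bigcup_i(ik+F_i)$ is a gapset (so a filtration $(F_0,F_1,F_2)$ with $\max F_0=m$ is an $(m+1)$-filtration, and $(F'_0,F'_1,F'_2)$ is considered as an $m$-filtration). Here $j+A=\{j+a:a\in A\}$. *)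

theory Defs
  imports Main
begin

definition gapset :: "nat set \<Rightarrow> bool" where
  "gapset G \<longleftrightarrow> finite G \<and> 0 \<notin> G \<and>
     (\<forall>z\<in>G. \<forall>x y. 0 < x \<longrightarrow> 0 < y \<longrightarrow> z = x + y \<longrightarrow> x \<in> G \<or> y \<in> G)"

definition k_filtration :: "nat \<Rightarrow> nat set list \<Rightarrow> bool" where
  "k_filtration k Fs \<longleftrightarrow> 1 \<le> k \<and> Fs \<noteq> [] \<and> Fs ! 0 = {1..k-1} \<and>
     (\<forall>i. Suc i < length Fs \<longrightarrow> Fs ! Suc i \<subseteq> Fs ! i)"

definition filtration_set :: "nat \<Rightarrow> nat set list \<Rightarrow> nat set" where
  "filtration_set k Fs = (\<Union>i<length Fs. (\<lambda>a. i * k + a) ` (Fs ! i))"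

definition gapset_filtration :: "nat \<Rightarrow> nat set list \<Rightarrow> bool" where
  "gapset_filtration k Fs \<longleftrightarrow> k_filtration k Fs \<and> gapset (filtration_set k Fs)"

end

theory Submission
  imports Defs
begin

text \<open>Write \<open>F\<^sub>i' = F\<^sub>i - {m}\<close>. The new set is \<open>{1..m-1} \<union> (m + F\<^sub>1') \<union> (2m + F\<^sub>2')\<close>, so a
decomposition \<open>z = x + y\<close> with a summand below \<open>m\<close> is harmless. Otherwise \<open>z = 2m + a\<close>,
\<open>x = m + b\<close>, \<open>y = m + c\<close> with \<open>a \<in> F\<^sub>2'\<close> and \<open>b + c = a\<close>. If \<open>b = 0\<close> then \<open>y = m + a\<close> lies in
\<open>m + F\<^sub>1'\<close> as \<open>F\<^sub>2 \<subseteq> F\<^sub>1\<close>; if \<open>b, c > 0\<close>, splitting \<open>2(m+1) + a = (m+1+b) + (m+1+c)\<close> in the old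
gapset puts \<open>b\<close> or \<open>c\<close> into \<open>F\<^sub>1\<close>.\<close>

lemma filtration_set_three:
  "filtration_set k [A, B, C] = A \<union> (\<lambda>a. k + a) ` B \<union> (\<lambda>a. 2 * k + a) ` C"
proof -
  have "{..<length [A, B, C]} = {0, 1, 2}" by auto
  then show ?thesis unfolding filtration_set_def by (auto simp: mult_2)
qed

lemma k_filtration_three_iff:
  "k_filtration k [A, B, C] \<longleftrightarrow> 1 \<le> k \<and> A = {1..k-1} \<and> B \<subseteq> A \<and> C \<subseteq> B"
proof -
  have "(\<forall>i. Suc i < length [A, B, C] \<longrightarrow> [A, B, C] ! Suc i \<subseteq> [A, B, C] ! i)
          \<longleftrightarrow> B \<subseteq> A \<and> C \<subseteq> B"
    by (auto simp: less_Suc_eq)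
  then show ?thesis unfolding k_filtration_def by auto
qed

lemma gapsetD:
  assumes "gapset G" "z \<in> G" "0 < x" "0 < y" "z = x + y"
  shows "x \<in> G \<or> y \<in> G"
  using assms unfolding gapset_def by blast

lemma gapset_filtration_split_last:
  assumes "gapset_filtration k [F0, F1, F2]"
    and "a \<in> F2" "a = b + c" "0 < b" "0 < c"
  shows "b \<in> F1 \<or> c \<in> F1"
proof -
  let ?G = "filtration_set k [F0, F1, F2]"
  have F0: "F0 = {1..k-1}" and "F2 \<subseteq> F1" "F1 \<subseteq> F0" and G: "gapset ?G"
    using assms(1) by (auto simp: gapset_filtration_def k_filtration_three_iff)
  then have "a \<in> {1..k-1}" using \<open>a \<in> F2\<close> by blast
  then have "a < k" by auto
  have "2 * k + a \<in> ?G" using \<open>a \<in> F2\<close> by (simp add: filtration_set_three)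
  then have "k + b \<in> ?G \<or> k + c \<in> ?G"
    by (rule gapsetD[OF G]) (use assms(3-5) in auto)
  moreover have "d \<in> F1" if "k + d \<in> ?G" "d < k" for d
    using that F0 by (auto simp: filtration_set_three)
  ultimately show ?thesis using \<open>a < k\<close> assms(3) by auto
qed

lemma gapset_filtration_remove_gap:
  assumes gf: "gapset_filtration (m + 1) [F0, F1, F2]" and "1 \<le> m"
  shows "gapset_filtration m [F0 - {m}, F1 - {m}, F2 - {m}]"
proof -
  have F0: "F0 = {1..m}" and F10: "F1 \<subseteq> F0" and F21: "F2 \<subseteq> F1"
    using gf by (auto simp: gapset_filtration_def k_filtration_three_iff)
  let ?G' = "filtration_set m [F0 - {m}, F1 - {m}, F2 - {m}]"
  have G': "?G' = {1..m-1} \<union> (\<lambda>a. m + a) ` (F1 - {m}) \<union> (\<lambda>a. 2 * m + a) ` (F2 - {m})"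
    using F0 by (auto simp: filtration_set_three)
  have "x \<in> ?G' \<or> y \<in> ?G'" if "z \<in> ?G'" "0 < x" "0 < y" "z = x + y" for z x y
  proof (cases "x < m \<or> y < m")
    case True
    then show ?thesis using that(2,3) G' by auto
  next
    case False
    then obtain b c where b: "x = m + b" and c: "y = m + c"
      by (metis le_add_diff_inverse not_less)
    from \<open>z \<in> ?G'\<close> obtain a where a: "a \<in> F2" "a < m" "z = 2 * m + a"
      using F0 F10 F21 \<open>z = x + y\<close> b c unfolding G' by fastforce
    have "b + c = a" using a(3) \<open>z = x + y\<close> b c by simp
    show ?thesis
    proof (cases "b = 0 \<or> c = 0")
      case True
      then show ?thesis using \<open>b + c = a\<close> a F21 b c unfolding G' by auto
    next
      case False
      then have "b \<in> F1 \<or> c \<in> F1"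
        using gapset_filtration_split_last[OF gf a(1)] \<open>b + c = a\<close> by simp
      then show ?thesis using \<open>b + c = a\<close> a(2) b c unfolding G' by auto
    qed
  qed
  moreover have "finite ?G'" "0 \<notin> ?G'"
    using finite_subset[OF F10] finite_subset[OF F21] F0 unfolding G' by auto
  ultimately have "gapset ?G'" unfolding gapset_def by blast
  moreover have "k_filtration m [F0 - {m}, F1 - {m}, F2 - {m}]"
    unfolding k_filtration_three_iff using F0 F10 F21 \<open>1 \<le> m\<close> by auto
  ultimately show ?thesis unfolding gapset_filtration_def by simp
qed

theorem mainTheorem15:
  fixes F0 F1 F2 :: "nat set" and m :: nat
  assumes "gapset_filtration (m + 1) [F0, F1, F2]"
    and "F0 \<noteq> {}" and "F1 \<noteq> {}" and "F2 \<noteq> {}"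
    and "Max F0 = m" and "Max F1 = m" and "Max F2 = m"
  shows "gapset_filtration m [F0 - {m}, F1 - {m}, F2 - {m}]"
proof -
  have "F0 = {1..m}"
    using assms(1) by (simp add: gapset_filtration_def k_filtration_three_iff)
  then have "1 \<le> m" using \<open>F0 \<noteq> {}\<close> by simp
  then show ?thesis using gapset_filtration_remove_gap assms(1) by blast
qed

end
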